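(* Let $a\in(\frac12,\frac23]$. Then the equation $\sum_{k=0}^{\varkappa_a}\delta_k(p/\lambda)^{k+1}(q/p)^{L_k}=1$ has a unique positive solution $\lambda=\lambda_a$. Moreover, there exists a constant $C>0$ such that for every $p\in(0,1)$ (with $q=1-p$), \[ \frac pa\max\big(1,(q/p)^C\big)\ \ge\ \lambda_a\ >\ p\max\big(1,(q/p)^C\big), \] and \[ L_n(x)-L_k(x)\le C(n-k+1)+1 \] for all $x\in[0,\frac1{1-a}]$ and all integers $0\le k\le n\le\varkappa_a(x)$. The first inequality for $\lambda_a$ is strict unless $a=\frac23$ and $p=\frac12$.
   Context: For $a\in[\frac12,\frac23]$ let $I_a=\big(\frac{2a-1}{1-a},1\big)$ and define $T_a$ on $[0,\frac1{1-a}]\setminus I_a$ by $T_a(x)=\frac1a(x+1)$ for $0\le x\le\frac{2a-1}{1-a}$ and $T_a(x)=\frac1a(x-1)$ for $1\le x\le\frac1{1-a}$; for $a=\frac23$ set $T_{2/3}(1)=0$. For $x\in[0,\frac1{1-a}]$ let $\varkappa_a(x)=\inf\{k\ge0:T_a^k(x)\in I_a\}$ ($\inf\emptyset=\infty$); for integers $0\le k\le\varkappa_a(x)$ put $\delta_k(x)=\mathbb 1\{T_a^k(x)<1\}$, $L_0(x)=0$, $L_k(x)=\sum_{i=0}^{k-1}\delta_i(x)$. Write $\varkappa_a=\varkappa_a(0)$, $\delta_k=\delta_k(0)$, $L_k=L_k(0)$; the sum is a series if $\varkappa_a=\infty$. Here $p\in(0,1)$, $q=1-p$ (the solution $\lambda_a$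 depends on $p$). *)

theory Defs
  imports "HOL-Analysis.Analysis" "HOL-Library.Extended_Nat"
begin

definition Ia :: "real \<Rightarrow> real set" where
  "Ia a = {(2*a - 1)/(1 - a) <..< 1}"

text \<open>The map \<open>T_a\<close>; on \<open>[0, (2a-1)/(1-a)]\<close> (minus the point 1, relevant only for a = 2/3)
  it is \<open>(x+1)/a\<close>, otherwise \<open>(x-1)/a\<close>.  This gives \<open>T_{2/3}(1) = 0\<close>.
  Values inside \<open>I_a\<close> are irrelevant (iteration stops on entering \<open>I_a\<close>).\<close>
definition Tmap :: "real \<Rightarrow> real \<Rightarrow> real" where
  "Tmap a x = (if x \<le> (2*a - 1)/(1 - a) \<and> x < 1 then (x + 1)/a else (x - 1)/a)"

definition kappa :: "real \<Rightarrow> real \<Rightarrow> enat" where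
  "kappa a x = (if \<exists>k. (Tmap a ^^ k) x \<in> Ia a
                then enat (LEAST k. (Tmap a ^^ k) x \<in> Ia a) else \<infinity>)"

definition delta :: "real \<Rightarrow> real \<Rightarrow> nat \<Rightarrow> nat" where
  "delta a x k = (if (Tmap a ^^ k) x < 1 then 1 else 0)"

definition Lcount :: "real \<Rightarrow> real \<Rightarrow> nat \<Rightarrow> nat" where
  "Lcount a x k = (\<Sum>i<k. delta a x i)"

definition lam_term :: "real \<Rightarrow> real \<Rightarrow> real \<Rightarrow> nat \<Rightarrow> real" where
  "lam_term a p lam k =
     real (delta a 0 k) * (p / lam) ^ (k + 1) * ((1 - p) / p) ^ (Lcount a 0 k)"

definition lam_eqn :: "real \<Rightarrow> real \<Rightarrow> real \<Rightarrow> bool" where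
  "lam_eqn a p lam = (case kappa a 0 of
       enat n \<Rightarrow> (\<Sum>k\<le>n. lam_term a p lam k) = 1
     | \<infinity> \<Rightarrow> lam_term a p lam sums 1)"

end

theory Submission
  imports Defs
begin

text \<open>
  With \<open>u = p/\<lambda>\<close> and \<open>r = q/p\<close> the equation reads \<open>\<Sum>k\<in>S. u^(k+1) * r^L_k = 1\<close>, where
  \<open>S\<close> is the set of \<open>k \<le> \<kappa>_a\<close> with \<open>\<delta>_k = 1\<close>. The left side is a power series in \<open>u\<close>
  with nonnegative coefficients, hence continuous and strictly increasing, so it suffices to
  show that it is \<open>\<le> 1\<close> at \<open>u = a/M\<close> and \<open>> 1\<close> at \<open>u = 1/M\<close>, where \<open>M = max 1 (r^C)\<close> and
  \<open>C\<close> is the supremum of \<open>L_k/(k+1)\<close> over \<open>k \<in> S\<close>.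

  Both branches of \<open>T_a\<close> are increasing, so an orbit that follows the branch pattern of
  the orbit of 0 stays to the right of it; hence it can first deviate only at some
  \<open>k \<in> S\<close>, by landing right of 1. Cutting there and inducting gives
  \<open>L_n(x) \<le> C(n+1) + 1\<close>. At \<open>u = a/M\<close> the terms are at most \<open>a^(k+1)\<close>, and the identity
  \<open>a T_a(y) = y \<plusminus> 1\<close> makes \<open>\<Sum>k\<in>S. a^(k+1)\<close> telescope to at most 1. At \<open>u = 1/M\<close> and
  \<open>r > 1\<close> the sum is \<open>\<Sum>k\<in>S. r^-(C(k+1) - L_k)\<close>. If it were \<open>\<le> 1\<close>, the slacks
  \<open>C(k+1) - L_k\<close> would be bounded away from 0 with finite sublevel sets; then windows with
  \<open>L_n(x) \<ge> C n\<close> would have bounded length, and subadditivity over long blocks would push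
  the supremum \<open>C\<close> strictly down.
\<close>

section \<open>Series and sublevel sets\<close>

lemma suminf_less_suminf:
  fixes f g :: "nat \<Rightarrow> real"
  assumes "summable f" "summable g" "\<And>k. f k \<le> g k" "f i < g i"
  shows "suminf f < suminf g"
proof -
  have "0 < (\<Sum>k. g k - f k)"
    using assms by (intro suminf_pos2[of _ i] summable_diff) auto
  then show ?thesis using suminf_diff[OF assms(2,1)] by simp
qed

context
  fixes r :: real and f :: "'a \<Rightarrow> real" and S :: "'a set"
  assumes r_gt_1: "1 < r"
    and powr_sums_le_1: "\<And>F. finite F \<Longrightarrow> F \<subseteq> S \<Longrightarrow> (\<Sum>k\<in>F. r powr (- f k)) \<le> 1"
begin

lemma pos_if_powr_sums_le_1:
  assumes "k0 \<in> S" "k \<in> S" "k \<noteq> k0"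
  shows "0 < f k"
proof -
  have "r powr (- f k0) + r powr (- f k) \<le> 1"
    using powr_sums_le_1[of "{k0, k}"] assms by simp
  moreover have "0 < r powr (- f k0)" using r_gt_1 by simp
  ultimately have "r powr (- f k) < 1" by linarith
  then show ?thesis using r_gt_1 ge_one_powr_ge_zero[of r "- f k"] by force
qed

lemma finite_sublevel_if_powr_sums_le_1: "finite {k\<in>S. f k \<le> B}"
proof -
  have "finite {k\<in>S. f k \<le> B} \<and> card {k\<in>S. f k \<le> B} \<le> nat \<lceil>r powr B\<rceil>"
  proof (rule finite_if_finite_subsets_card_bdd)
    fix G assume G: "G \<subseteq> {k\<in>S. f k \<le> B}" "finite G"
    have "real (card G) * r powr (- B) = (\<Sum>k\<in>G. r powr (- B))" by simp
    also have "\<dots> \<le> (\<Sum>k\<in>G. r powr (- f k))"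
      using G r_gt_1 by (intro sum_mono powr_mono) auto
    also have "\<dots> \<le> 1" using powr_sums_le_1 G by auto
    finally have "real (card G) \<le> r powr B"
      using r_gt_1 by (simp add: powr_minus field_simps)
    then show "card G \<le> nat \<lceil>r powr B\<rceil>" by linarith
  qed
  then show ?thesis ..
qed

end

lemma pos_lower_bound_if_finite_sublevel:
  fixes f :: "'a \<Rightarrow> real"
  assumes "x \<in> S" "\<And>k. k \<in> S \<Longrightarrow> 0 < f k" "finite {k\<in>S. f k \<le> f x}"
  shows "\<exists>\<phi>>0. \<forall>k\<in>S. \<phi> \<le> f k"
proof (intro exI conjI ballI)
  let ?low = "{k\<in>S. f k \<le> f x}"
  have "x \<in> ?low" using assms(1) by simp
  then obtain k where "k \<in> ?low" "Min (f ` ?low) = f k"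
    using assms(3) Min_in[of "f ` ?low"] by blast
  then show "0 < Min (f ` ?low)" using assms(2) by simp
  fix k assume "k \<in> S"
  have "Min (f ` ?low) \<le> f x" using assms(3) \<open>x \<in> ?low\<close> by simp
  moreover have "Min (f ` ?low) \<le> f k" if "f k \<le> f x" using assms(3) \<open>k \<in> S\<close> that by simp
  ultimately show "Min (f ` ?low) \<le> f k" by force
qed

lemma linear_lower_bound:
  fixes f :: "nat \<Rightarrow> real"
  assumes "0 < \<phi>" "0 < \<epsilon>" "0 \<le> c"
    and "\<And>k. k \<in> S \<Longrightarrow> \<phi> \<le> f k" "\<And>k. k \<in> S \<Longrightarrow> \<epsilon> * real k - c \<le> f k"
  shows "\<exists>\<eta>>0. \<forall>k\<in>S. \<eta> * (real k + 1) \<le> f k"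
proof (intro exI conjI ballI)
  define K where "K = 2 * (c + \<epsilon>) / \<epsilon>"
  define \<eta> where "\<eta> = min (\<epsilon>/2) (\<phi>/K)"
  have "0 < K" using assms(2,3) by (simp add: K_def)
  then show "0 < \<eta>" using assms(1,2) by (simp add: \<eta>_def)
  fix k assume "k \<in> S"
  have "\<eta> * (real k + 1) \<le> \<epsilon>/2 * (real k + 1)"
    unfolding \<eta>_def by (rule mult_right_mono[OF min.cobounded1]) simp
  moreover have "\<eta> * (real k + 1) \<le> \<phi>/K * (real k + 1)"
    unfolding \<eta>_def by (rule mult_right_mono[OF min.cobounded2]) simp
  moreover have "\<epsilon>/2 * (real k + 1) \<le> \<epsilon> * real k - c" if "K \<le> real k + 1"
    using that assms(2) by (simp add: K_def field_simps)
  moreover have "\<phi>/K * (real k + 1) \<le> \<phi>" if "real k + 1 < K"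
  proof -
    have "\<phi>/K * (real k + 1) \<le> \<phi>/K * K"
      using that assms(1) \<open>0 < K\<close> by (intro mult_left_mono) auto
    then show ?thesis using \<open>0 < K\<close> by simp
  qed
  ultimately show "\<eta> * (real k + 1) \<le> f k"
    using assms(4,5)[OF \<open>k \<in> S\<close>] by (cases "K \<le> real k + 1") linarith+
qed

section \<open>Orbits of the map with a hole\<close>

locale hole_map =
  fixes a :: real
  assumes a_gt: "1/2 < a" and a_le: "a \<le> 2/3"
begin

definition hole_start :: real where "hole_start = (2*a - 1)/(1 - a)"
definition right_end :: real where "right_end = 1/(1 - a)"

abbreviation orbit :: "real \<Rightarrow> nat \<Rightarrow> real" where
  "orbit x k \<equiv> (Tmap a ^^ k) x"

definition admissible :: "real \<Rightarrow> nat \<Rightarrow> bool" where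
  "admissible x n \<longleftrightarrow> 0 \<le> x \<and> (\<forall>i<n. orbit x i \<notin> Ia a)"

lemma a_pos: "0 < a" and a_lt_1: "a < 1"
  using a_gt a_le by auto

lemma Ia_iff: "y \<in> Ia a \<longleftrightarrow> hole_start < y \<and> y < 1"
  by (simp add: Ia_def hole_start_def)

lemma hole_start_pos: "0 < hole_start"
  using a_gt a_le by (simp add: hole_start_def)

lemma zero_notin_Ia: "(0::real) \<notin> Ia a"
  using hole_start_pos by (simp add: Ia_iff)

lemma Tmap_left: "y < 1 \<Longrightarrow> y \<notin> Ia a \<Longrightarrow> Tmap a y = (y + 1)/a"
  by (auto simp: Tmap_def Ia_iff hole_start_def)

lemma Tmap_right: "1 \<le> y \<Longrightarrow> Tmap a y = (y - 1)/a"
  by (simp add: Tmap_def)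

lemma Tmap_nonneg: "0 \<le> y \<Longrightarrow> y \<notin> Ia a \<Longrightarrow> 0 \<le> Tmap a y"
  using a_pos by (cases "y < 1") (simp_all add: Tmap_left Tmap_right)

lemma Tmap_le_right_end:
  assumes "0 \<le> y" "y \<le> right_end" "y \<notin> Ia a"
  shows "Tmap a y \<le> right_end"
proof -
  have end_eq: "right_end * a = hole_start + 1" "right_end * a = right_end - 1"
    using a_lt_1 by (simp_all add: right_end_def hole_start_def field_simps)
  show ?thesis
  proof (cases "y < 1")
    case True
    then have "y \<le> hole_start" using assms(3) by (simp add: Ia_iff)
    then show ?thesis using True assms(3) end_eq by (simp add: Tmap_left pos_divide_le_eq[OF a_pos])
  next
    case False
    then show ?thesis using assms(2) end_eq by (simp add: Tmap_right pos_divide_le_eq[OF a_pos])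
  qed
qed

lemma orbit_add: "orbit x (i + j) = orbit (orbit x i) j"
  by (metis add.commute comp_apply funpow_add)

lemma delta_orbit: "delta a (orbit x i) j = delta a x (i + j)"
  by (simp add: delta_def orbit_add)

lemma delta_zero_0: "delta a 0 0 = 1"
  by (simp add: delta_def)

lemma Lcount_0 [simp]: "Lcount a x 0 = 0"
  by (simp add: Lcount_def)

lemma Lcount_Suc: "Lcount a x (Suc n) = Lcount a x n + delta a x n"
  by (simp add: Lcount_def)

lemma Lcount_add: "Lcount a x (i + j) = Lcount a x i + Lcount a (orbit x i) j"
  by (induction j) (simp_all add: Lcount_Suc delta_orbit)

lemma Lcount_le: "Lcount a x n \<le> n"
  by (induction n) (simp_all add: Lcount_Suc delta_def)

lemma Lcount_zero_pos: "0 < k \<Longrightarrow> 1 \<le> Lcount a 0 k"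
  using Lcount_add[of 0 1 "k - 1"] by (simp add: Lcount_Suc delta_zero_0)

lemma admissible_mono: "admissible x n \<Longrightarrow> m \<le> n \<Longrightarrow> admissible x m"
  by (simp add: admissible_def)

lemma orbit_nonneg: "admissible x n \<Longrightarrow> 0 \<le> orbit x n"
proof (induction n)
  case (Suc n)
  then have "0 \<le> orbit x n" "orbit x n \<notin> Ia a"
    using admissible_mono[of x "Suc n" n] by (simp_all add: admissible_def)
  then show ?case by (simp add: Tmap_nonneg)
qed (simp add: admissible_def)

lemma orbit_le_right_end: "admissible x n \<Longrightarrow> x \<le> right_end \<Longrightarrow> orbit x n \<le> right_end"
proof (induction n)
  case (Suc n)
  then have adm: "admissible x n" and avoid: "orbit x n \<notin> Ia a"
    by (simp_all add: admissible_def)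
  have "Tmap a (orbit x n) \<le> right_end"
    using Tmap_le_right_end[OF orbit_nonneg[OF adm] Suc.IH[OF adm Suc.prems(2)] avoid] .
  then show ?case by simp
qed simp

lemma admissible_orbit:
  assumes "admissible x (i + j)"
  shows "admissible (orbit x i) j"
proof -
  have "0 \<le> orbit x i" using orbit_nonneg admissible_mono[OF assms] by simp
  moreover have "orbit (orbit x i) l \<notin> Ia a" if "l < j" for l
    using assms that orbit_add[where x=x and i=i and j=l] unfolding admissible_def
    by (metis add_less_cancel_left)
  ultimately show ?thesis by (simp add: admissible_def)
qed

lemma le_kappa_iff_admissible:
  assumes "0 \<le> x"
  shows "enat n \<le> kappa a x \<longleftrightarrow> admissible x n"
proof (cases "\<exists>k. orbit x k \<in> Ia a")
  case True
  define K where "K = (LEAST k. orbit x k \<in> Ia a)"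
  have hit: "orbit x K \<in> Ia a" and before: "\<forall>i<K. orbit x i \<notin> Ia a"
    using True unfolding K_def by (auto intro: LeastI_ex dest: not_less_Least)
  have "n \<le> K \<longleftrightarrow> (\<forall>i<n. orbit x i \<notin> Ia a)"
  proof
    show "n \<le> K \<Longrightarrow> \<forall>i<n. orbit x i \<notin> Ia a" using before by simp
    show "\<forall>i<n. orbit x i \<notin> Ia a \<Longrightarrow> n \<le> K" using hit by (cases "K < n") auto
  qed
  moreover have "kappa a x = enat K"
    using True unfolding kappa_def K_def by (rule if_P)
  ultimately show ?thesis using assms by (simp add: admissible_def)
next
  case False
  then have "kappa a x = \<infinity>" by (simp add: kappa_def)
  then show ?thesis using False assms by (simp add: admissible_def)
qed

lemma kappa_enat_hit: "kappa a x = enat K \<Longrightarrow> orbit x K \<in> Ia a"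
  unfolding kappa_def by (auto split: if_splits intro: LeastI_ex)

lemma orbit_zero_le_orbit:
  assumes "admissible x j" "\<forall>i<j. delta a x i = delta a 0 i"
  shows "orbit 0 j \<le> orbit x j"
  using assms
proof (induction j)
  case (Suc j)
  have le: "orbit 0 j \<le> orbit x j" and avoid: "orbit x j \<notin> Ia a"
    and same: "delta a x j = delta a 0 j"
    using Suc admissible_mono[of x "Suc j" j] by (auto simp: admissible_def)
  show ?case
  proof (cases "orbit x j < 1")
    case True
    then have "orbit 0 j < 1" using same by (simp add: delta_def split: if_splits)
    moreover have "orbit 0 j \<notin> Ia a"
      using True avoid le by (simp add: Ia_iff)
    ultimately show ?thesis
      using True avoid le a_pos by (simp add: Tmap_left divide_right_mono)
  next
    case False
    then have "1 \<le> orbit 0 j" using same by (simp add: delta_def split: if_splits)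
    then show ?thesis using False le a_pos by (simp add: Tmap_right divide_right_mono)
  qed
qed (simp add: admissible_def)

lemma first_disagreement:
  assumes "admissible x m" "\<forall>i<m. delta a x i = delta a 0 i" "delta a x m \<noteq> delta a 0 m"
  shows "delta a x m = 0" "delta a 0 m = 1"
  using orbit_zero_le_orbit[OF assms(1,2)] assms(3) by (auto simp: delta_def split: if_splits)

lemma agreement_le_kappa:
  assumes "admissible x (Suc j)" "\<forall>i<j. delta a x i = delta a 0 i"
  shows "enat j \<le> kappa a 0"
proof -
  have "orbit 0 i \<notin> Ia a" if "i < j" for i
  proof
    assume hit: "orbit 0 i \<in> Ia a"
    have adm: "admissible x i" using assms(1) that by (simp add: admissible_def)
    have "delta a x i = 1" using hit assms(2) that by (simp add: delta_def Ia_iff)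
    then have "orbit x i < 1" by (simp add: delta_def split: if_splits)
    with hit orbit_zero_le_orbit[OF adm] assms(2) that have "orbit x i \<in> Ia a"
      by (simp add: Ia_iff)
    then show False using assms(1) that by (simp add: admissible_def)
  qed
  then show ?thesis by (simp add: le_kappa_iff_admissible admissible_def)
qed

section \<open>Visits to the left branch\<close>

definition support :: "nat set" where
  "support = {k. enat k \<le> kappa a 0 \<and> delta a 0 k = 1}"

definition rate :: real where
  "rate = (SUP k\<in>support. real (Lcount a 0 k) / (real k + 1))"

definition slack :: "nat \<Rightarrow> real" where
  "slack k = rate * (real k + 1) - real (Lcount a 0 k)"

definition deficit :: "real \<Rightarrow> nat \<Rightarrow> real" where
  "deficit x n = rate * (real n + 1) + 1 - real (Lcount a x n)"

lemma zero_in_support: "0 \<in> support"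
  by (simp add: support_def delta_zero_0 zero_enat_def[symmetric])

lemma bdd_above_ratios: "bdd_above ((\<lambda>k. real (Lcount a 0 k) / (real k + 1)) ` support)"
proof (rule bdd_aboveI[of _ 1], clarify)
  fix k
  have "real (Lcount a 0 k) \<le> real k" using Lcount_le by simp
  then show "real (Lcount a 0 k) / (real k + 1) \<le> 1" by (simp add: divide_le_eq)
qed

lemma slack_nonneg: "k \<in> support \<Longrightarrow> 0 \<le> slack k"
  using cSUP_upper[OF _ bdd_above_ratios, of k]
  by (simp add: slack_def rate_def divide_le_eq add.commute)

lemma support_has_pos: "\<exists>k\<in>support. 0 < k"
proof (cases "kappa a 0")
  case (enat K)
  then have "orbit 0 K \<in> Ia a" by (rule kappa_enat_hit)
  then have "K \<in> support" "K \<noteq> 0"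
    using enat zero_notin_Ia by (auto simp: support_def delta_def Ia_iff intro!: gr0I)
  then show ?thesis by blast
next
  case infinity
  txt \<open>Otherwise the orbit of 0 stays right of 1 after the first step, and its distance to
    the fixed point \<^const>\<open>right_end\<close> of \<open>y \<mapsto> (y - 1)/a\<close> grows like \<open>a^-k\<close>.\<close>
  show ?thesis
  proof (rule ccontr)
    assume no_pos: "\<not> ?thesis"
    have right: "1 \<le> orbit 0 (Suc k)" for k
    proof -
      have "delta a 0 (Suc k) \<noteq> 1" using no_pos infinity by (auto simp: support_def)
      then show ?thesis by (simp add: delta_def split: if_splits)
    qed
    have fixed: "a * right_end + 1 = right_end"
      using a_lt_1 by (simp add: right_end_def field_simps)
    define d where "d = right_end - 1/a"
    have gap: "right_end - orbit 0 (Suc k) = d / a^k" for k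
    proof (induction k)
      case 0
      show ?case using zero_notin_Ia by (simp add: Tmap_left d_def)
    next
      case (Suc k)
      have "orbit 0 (Suc (Suc k)) = (orbit 0 (Suc k) - 1)/a"
        using right[of k] by (simp add: Tmap_right)
      then have "right_end - orbit 0 (Suc (Suc k)) = (right_end - orbit 0 (Suc k)) / a"
        using a_pos fixed by (simp add: field_simps)
      then show ?case using Suc.IH by simp
    qed
    have "0 < d" using a_gt a_le by (simp add: d_def right_end_def field_simps)
    have "1 < 1/a" using a_pos a_lt_1 by simp
    then obtain k where "right_end / d < (1/a)^k"
      using real_arch_pow by blast
    then have "right_end < d / a^k"
      using \<open>0 < d\<close> by (simp add: pos_divide_less_eq power_one_over mult.commute)
    then show False using gap[of k] right[of k] by simp
  qed
qed

lemma rate_pos: "0 < rate"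
proof -
  obtain k where "k \<in> support" "0 < k" using support_has_pos by blast
  then have "real (Lcount a 0 k) / (real k + 1) \<le> rate" "1 \<le> Lcount a 0 k"
    using cSUP_upper[OF _ bdd_above_ratios] Lcount_zero_pos by (auto simp: rate_def)
  moreover have "0 < real (Lcount a 0 k) / (real k + 1)" using calculation(2) by simp
  ultimately show ?thesis by linarith
qed

lemma Lcount_split:
  assumes adm: "admissible x n" and "0 < n"
  obtains (final) k where "k \<in> support" "k < n" "Lcount a x n = Lcount a 0 k + 1"
  | (departure) m where "m \<in> support" "m < n" "admissible (orbit x (Suc m)) (n - Suc m)"
      "Lcount a x n = Lcount a 0 m + Lcount a (orbit x (Suc m)) (n - Suc m)"
proof (cases "\<exists>m<n. delta a x m \<noteq> delta a 0 m")
  case True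
  define m where "m = (LEAST m. m < n \<and> delta a x m \<noteq> delta a 0 m)"
  have m: "m < n" "delta a x m \<noteq> delta a 0 m"
    using LeastI_ex[OF True[unfolded Bex_def]] by (simp_all add: m_def)
  have agree: "\<forall>i<m. delta a x i = delta a 0 i"
  proof (intro allI impI)
    fix i assume "i < m"
    then have "\<not> (i < n \<and> delta a x i \<noteq> delta a 0 i)"
      unfolding m_def by (rule not_less_Least)
    with \<open>i < m\<close> m(1) show "delta a x i = delta a 0 i" by simp
  qed
  have "admissible x m" using adm m by (simp add: admissible_def)
  note first = first_disagreement[OF this agree m(2)]
  have "Lcount a x (Suc m) = Lcount a 0 m"
    using agree first by (simp add: Lcount_Suc Lcount_def)
  then have "Lcount a x n = Lcount a 0 m + Lcount a (orbit x (Suc m)) (n - Suc m)"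
    using Lcount_add[of x "Suc m" "n - Suc m"] m by simp
  moreover have "m \<in> support"
    using agreement_le_kappa[OF admissible_mono[OF adm] agree] m first by (simp add: support_def)
  moreover have "admissible (orbit x (Suc m)) (n - Suc m)"
    using admissible_orbit[of x "Suc m" "n - Suc m"] adm m by simp
  ultimately show ?thesis using departure m by blast
next
  case False
  define S where "S = {k. k < n \<and> delta a 0 k = 1}"
  define k where "k = Max S"
  have "finite S" "0 \<in> S" using \<open>0 < n\<close> delta_zero_0 by (simp_all add: S_def)
  then have "k \<in> S" and k_max: "\<And>i. i \<in> S \<Longrightarrow> i \<le> k"
    unfolding k_def by (auto intro: Max_in)
  then have k: "k < n" "delta a 0 k = 1" by (simp_all add: S_def)
  have last: "delta a 0 i = 0" if "k < i" "i < n" for i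
    using k_max[of i] that by (auto simp: S_def delta_def split: if_splits)
  have "delta a (orbit 0 (Suc k)) i = 0" if "i < n - Suc k" for i
    using last[of "Suc k + i"] that unfolding delta_orbit by simp
  then have "Lcount a (orbit 0 (Suc k)) (n - Suc k) = 0"
    unfolding Lcount_def by (intro sum.neutral) auto
  then have "Lcount a 0 n = Lcount a 0 k + 1"
    using Lcount_add[of 0 "Suc k" "n - Suc k"] k by (simp add: Lcount_Suc)
  moreover have "Lcount a x n = Lcount a 0 n" using False by (simp add: Lcount_def)
  moreover have "k \<in> support"
    using agreement_le_kappa[OF admissible_mono[OF adm]] False k by (simp add: support_def)
  ultimately show ?thesis using final k by simp
qed

lemma deficit_split:
  assumes "admissible x n" "0 < n"
  obtains (final) k where "k \<in> support" "k < n" "deficit x n = slack k + rate * (real n - real k)"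
  | (departure) m y where "m \<in> support" "m < n" "admissible y (n - Suc m)"
      "deficit x n = slack m + deficit y (n - Suc m)"
  using assms
proof (cases rule: Lcount_split)
  case (final k)
  then show ?thesis
    using that(1)[of k] by (simp add: deficit_def slack_def algebra_simps)
next
  case (departure m)
  then show ?thesis
    using that(2)[of m "orbit x (Suc m)"] by (simp add: deficit_def slack_def of_nat_diff algebra_simps)
qed

lemma deficit_nonneg: "admissible x n \<Longrightarrow> 0 \<le> deficit x n"
proof (induction n arbitrary: x rule: less_induct)
  case (less n)
  show ?case
  proof (cases "n = 0")
    case True
    then show ?thesis using rate_pos by (simp add: deficit_def)
  next
    case False
    then have "0 < n" by simp
    with less.prems show ?thesis
    proof (cases rule: deficit_split)
      case (final k)
      then show ?thesis using rate_pos slack_nonneg by simp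
    next
      case (departure m y)
      then show ?thesis using less.IH[of "n - Suc m" y] slack_nonneg by simp
    qed
  qed
qed

lemma Lcount_window_le:
  assumes "admissible x n" "k \<le> n"
  shows "real (Lcount a x n) - real (Lcount a x k) \<le> rate * (real n - real k + 1) + 1"
proof -
  have "Lcount a x n = Lcount a x k + Lcount a (orbit x k) (n - k)"
    using Lcount_add[of x k "n - k"] assms(2) by simp
  moreover have "0 \<le> deficit (orbit x k) (n - k)"
    using assms by (intro deficit_nonneg admissible_orbit) simp
  ultimately show ?thesis using assms(2) by (simp add: deficit_def of_nat_diff)
qed

section \<open>Approaching the supremum\<close>

text \<open>Each cut of \<open>deficit_split\<close> uses up a slack \<open>\<ge> \<phi>\<close>, so fewer than \<open>j\<close> cuts
  occur, and each piece before the last is at most \<open>M + 1\<close> long.\<close>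

lemma window_length_bound:
  assumes "0 < \<phi>" "\<forall>k\<in>support. \<phi> \<le> slack k" and M: "\<forall>k\<in>support. slack k \<le> B \<longrightarrow> k \<le> M"
  shows "admissible x n \<Longrightarrow> deficit x n \<le> B \<Longrightarrow> deficit x n < real j * \<phi> \<Longrightarrow>
           real n \<le> real j * (real M + 1) + B / rate"
proof (induction j arbitrary: n x)
  case 0
  then show ?case using deficit_nonneg[of x n] by simp
next
  case (Suc j)
  have "0 \<le> B" using Suc.prems(1,2) deficit_nonneg[of x n] by simp
  show ?case
  proof (cases "n = 0")
    case True
    then show ?thesis using \<open>0 \<le> B\<close> rate_pos by simp
  next
    case False
    then have "0 < n" by simp
    with Suc.prems(1) show ?thesis
    proof (cases rule: deficit_split)
      case (final k)
      have "0 \<le> rate * (real n - real k)" using final(2) rate_pos by simp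
      then have "k \<le> M" using M final(1,3) Suc.prems(2) by simp
      moreover have "rate * (real n - real k) \<le> B"
        using final Suc.prems(2) slack_nonneg[of k] by simp
      then have "real n - real k \<le> B / rate" using rate_pos by (simp add: field_simps)
      moreover have "real M + 1 \<le> real (Suc j) * (real M + 1)" by simp
      ultimately show ?thesis by linarith
    next
      case (departure m y)
      have "0 \<le> deficit y (n - Suc m)" using departure(3) by (rule deficit_nonneg)
      then have "m \<le> M" using departure M Suc.prems(2) by simp
      have "\<phi> \<le> slack m" using assms(2) departure(1) by simp
      then have "deficit y (n - Suc m) < real j * \<phi>"
        using departure(4) Suc.prems(3) by (simp add: algebra_simps)
      moreover have "deficit y (n - Suc m) \<le> B"
        using departure(1,4) Suc.prems(2) slack_nonneg[of m] by simp
      ultimately have "real (n - Suc m) \<le> real j * (real M + 1) + B / rate"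
        using Suc.IH[OF departure(3)] by simp
      then show ?thesis using \<open>m \<le> M\<close> departure(2) by (simp add: of_nat_diff algebra_simps)
    qed
  qed
qed

lemma Lcount_le_of_block_bound:
  assumes "0 < n" "0 \<le> l" and block: "\<And>y. admissible y n \<Longrightarrow> real (Lcount a y n) \<le> l"
  shows "admissible x k \<Longrightarrow> real (Lcount a x k) \<le> real k / real n * l + real n"
proof (induction k arbitrary: x rule: less_induct)
  case (less k)
  show ?case
  proof (cases "k < n")
    case True
    have "real (Lcount a x k) \<le> real k" using Lcount_le by simp
    moreover have "0 \<le> real k / real n * l" using assms(2) by simp
    ultimately show ?thesis using True by linarith
  next
    case False
    have "Lcount a x k = Lcount a x n + Lcount a (orbit x n) (k - n)"
      using Lcount_add[of x n "k - n"] False by simp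
    moreover have "real (Lcount a x n) \<le> l"
      using block admissible_mono[OF less.prems] False by simp
    moreover have "real (Lcount a (orbit x n) (k - n)) \<le> real (k - n) / real n * l + real n"
      using less.IH[of "k - n"] admissible_orbit[of x n "k - n"] less.prems False assms(1) by simp
    moreover have "real (k - n) / real n * l = real k / real n * l - l"
      using False assms(1) by (simp add: of_nat_diff field_simps)
    ultimately show ?thesis by linarith
  qed
qed

text \<open>Otherwise windows of length \<open>n\<close> count at most some \<open>l < rate * n\<close>, and splitting long
  orbits into such blocks pushes every ratio \<open>L_k/(k+1)\<close> uniformly below the supremum.\<close>

lemma rate_reached_by_windows:
  assumes "0 < \<phi>" "\<forall>k\<in>support. \<phi> \<le> slack k" "0 < n"
  shows "\<exists>x. admissible x n \<and> rate * real n \<le> real (Lcount a x n)"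
proof (rule ccontr)
  assume "\<not> ?thesis"
  then have below: "real (Lcount a x n) < rate * real n" if "admissible x n" for x
    using that by (auto simp: not_le)
  define l where "l = real_of_int (\<lceil>rate * real n\<rceil> - 1)"
  have "0 < rate * real n" using rate_pos assms(3) by simp
  then have l: "0 \<le> l" "l < rate * real n"
    using ceiling_correct[of "rate * real n"] by (simp_all add: l_def)
  have block: "real (Lcount a x n) \<le> l" if "admissible x n" for x
  proof -
    have "\<not> \<lceil>rate * real n\<rceil> \<le> int (Lcount a x n)"
      using below[OF that] by (simp add: ceiling_le_iff)
    then show ?thesis unfolding l_def by linarith
  qed
  define \<epsilon> where "\<epsilon> = rate - l / real n"
  have "0 < \<epsilon>" using l assms(3) by (simp add: \<epsilon>_def field_simps)
  have "\<epsilon> * real k - real n \<le> slack k" if "k \<in> support" for k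
  proof -
    have "admissible 0 k" using that by (simp add: support_def le_kappa_iff_admissible)
    then have "real (Lcount a 0 k) \<le> real k / real n * l + real n"
      using Lcount_le_of_block_bound[OF assms(3) l(1) block] by blast
    then show ?thesis using rate_pos by (simp add: slack_def \<epsilon>_def algebra_simps)
  qed
  then obtain \<eta> where "0 < \<eta>" and \<eta>: "\<forall>k\<in>support. \<eta> * (real k + 1) \<le> slack k"
    using linear_lower_bound[of \<phi> \<epsilon> "real n" support slack] assms(1,2) \<open>0 < \<epsilon>\<close> by auto
  have "real (Lcount a 0 k) / (real k + 1) \<le> rate - \<eta>" if "k \<in> support" for k
    using \<eta> that by (simp add: slack_def field_simps)
  then have "(SUP k\<in>support. real (Lcount a 0 k) / (real k + 1)) \<le> rate - \<eta>"
    using zero_in_support by (intro cSUP_least) auto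
  then have "rate \<le> rate - \<eta>" by (simp only: rate_def[symmetric])
  then show False using \<open>0 < \<eta>\<close> by simp
qed

lemma slack_powr_sum_gt_one:
  assumes "1 < r"
  shows "\<exists>F. finite F \<and> F \<subseteq> support \<and> 1 < (\<Sum>k\<in>F. r powr (- slack k))"
proof (rule ccontr)
  assume "\<not> ?thesis"
  then have bounded: "(\<Sum>k\<in>F. r powr (- slack k)) \<le> 1" if "finite F" "F \<subseteq> support" for F
    using that by (auto simp: not_less)
  have sublevel: "finite {k\<in>support. slack k \<le> B}" for B
    using finite_sublevel_if_powr_sums_le_1[OF assms bounded] .
  have "0 < slack k" if "k \<in> support" for k
  proof (cases "k = 0")
    case True
    then show ?thesis using rate_pos by (simp add: slack_def)
  next
    case False
    then show ?thesis
      using pos_if_powr_sums_le_1[OF assms bounded zero_in_support that] by simp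
  qed
  then obtain \<phi> where "0 < \<phi>" and \<phi>: "\<forall>k\<in>support. \<phi> \<le> slack k"
    using pos_lower_bound_if_finite_sublevel[OF zero_in_support _ sublevel] by blast
  define B where "B = rate + 1"
  obtain M where M: "\<forall>k\<in>support. slack k \<le> B \<longrightarrow> k \<le> M"
    using sublevel[of B] finite_nat_set_iff_bounded_le by auto
  obtain j where j: "B < real j * \<phi>" using ex_less_of_nat_mult[OF \<open>0 < \<phi>\<close>] by blast
  define n where "n = nat \<lceil>real j * (real M + 1) + B / rate\<rceil> + 1"
  have "real j * (real M + 1) + B / rate < real n" unfolding n_def by linarith
  moreover have "0 < n" by (simp add: n_def)
  then obtain x where "admissible x n" "rate * real n \<le> real (Lcount a x n)"
    using rate_reached_by_windows[OF \<open>0 < \<phi>\<close> \<phi>] by blast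
  then have "deficit x n \<le> B" "deficit x n < real j * \<phi>"
    using j by (simp_all add: deficit_def B_def algebra_simps)
  then have "real n \<le> real j * (real M + 1) + B / rate"
    using window_length_bound[OF \<open>0 < \<phi>\<close> \<phi> M] \<open>admissible x n\<close> by blast
  ultimately show False by linarith
qed

section \<open>The equation for \<open>\<lambda>\<close>\<close>

definition lam_scale :: "real \<Rightarrow> real" where
  "lam_scale r = max 1 (r powr rate)"

text \<open>The terms of \<^const>\<open>lam_eqn\<close> in the variables \<open>u = p/\<lambda>\<close> and \<open>r = q/p\<close>, cut off after
  \<open>\<kappa>_a\<close> so that the finite and the infinite case become the same series.\<close>

definition eqn_term :: "real \<Rightarrow> real \<Rightarrow> nat \<Rightarrow> real" where
  "eqn_term r u k = (if k \<in> support then u^(k+1) * r^(Lcount a 0 k) else 0)"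

lemma lam_eqn_iff_sums: "lam_eqn a p lam \<longleftrightarrow> eqn_term ((1 - p)/p) (p/lam) sums 1"
proof (cases "kappa a 0")
  case (enat K)
  have "lam_term a p lam k = eqn_term ((1 - p)/p) (p/lam) k" if "k \<le> K" for k
    using that enat by (simp add: lam_term_def eqn_term_def support_def delta_def)
  then have "(\<Sum>k\<le>K. lam_term a p lam k) = (\<Sum>k\<le>K. eqn_term ((1 - p)/p) (p/lam) k)"
    by simp
  moreover have "eqn_term ((1 - p)/p) (p/lam) sums (\<Sum>k\<le>K. eqn_term ((1 - p)/p) (p/lam) k)"
    using enat by (intro sums_finite) (auto simp: eqn_term_def support_def)
  ultimately show ?thesis using enat by (auto simp: lam_eqn_def sums_iff)
next
  case infinity
  then have "lam_term a p lam = eqn_term ((1 - p)/p) (p/lam)"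
    by (auto simp: lam_term_def eqn_term_def support_def delta_def)
  then show ?thesis using infinity by (simp add: lam_eqn_def)
qed

lemma lam_scale_ge_1: "1 \<le> lam_scale r"
  by (simp add: lam_scale_def)

lemma lower_end_pos: "0 < a / lam_scale r"
  using a_pos lam_scale_ge_1[of r] by simp

lemma power_Lcount_le_lam_scale:
  assumes "0 < r" "k \<in> support"
  shows "r^(Lcount a 0 k) \<le> lam_scale r^(k+1)"
proof (cases "r \<le> 1")
  case True
  then have "r^(Lcount a 0 k) \<le> 1" using assms(1) by (simp add: power_le_one)
  also have "1 \<le> lam_scale r^(k+1)" using lam_scale_ge_1 by (rule one_le_power)
  finally show ?thesis .
next
  case False
  have "r^(Lcount a 0 k) = r powr real (Lcount a 0 k)" using assms(1) by (simp add: powr_realpow)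
  also have "\<dots> \<le> r powr (real (k+1) * rate)"
    using slack_nonneg[OF assms(2)] False by (intro powr_mono) (auto simp: slack_def algebra_simps)
  also have "\<dots> = (r powr rate)^(k+1)" using assms(1) by (simp only: powr_power)
  also have "\<dots> \<le> lam_scale r^(k+1)" by (intro power_mono) (auto simp: lam_scale_def)
  finally show ?thesis .
qed

lemma eqn_term_0: "eqn_term r u 0 = u"
  using zero_in_support by (simp add: eqn_term_def)

lemma eqn_term_nonneg: "0 \<le> r \<Longrightarrow> 0 \<le> u \<Longrightarrow> 0 \<le> eqn_term r u k"
  by (simp add: eqn_term_def)

lemma eqn_term_mono: "0 \<le> r \<Longrightarrow> 0 \<le> u \<Longrightarrow> u \<le> v \<Longrightarrow> eqn_term r u k \<le> eqn_term r v k"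
  using power_mono[of u v "k+1"] by (auto simp: eqn_term_def intro: mult_right_mono)

lemma eqn_term_le_geometric:
  assumes "0 < r" "0 \<le> u"
  shows "eqn_term r u k \<le> (u * lam_scale r)^(k+1)"
proof (cases "k \<in> support")
  case True
  then have "eqn_term r u k \<le> u^(k+1) * lam_scale r^(k+1)"
    using power_Lcount_le_lam_scale[OF assms(1)] assms(2) by (simp add: eqn_term_def mult_left_mono)
  then show ?thesis by (simp only: power_mult_distrib)
next
  case False
  then show ?thesis using assms lam_scale_ge_1[of r] by (simp add: eqn_term_def)
qed

lemma summable_eqn_term:
  assumes "0 < r" "0 \<le> u" "u < 1 / lam_scale r"
  shows "summable (eqn_term r u)"
proof (rule summable_comparison_test')
  have "u * lam_scale r < 1" using assms(3) lam_scale_ge_1[of r] by (simp add: field_simps)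
  then show "summable (\<lambda>k. (u * lam_scale r)^(k+1))"
    using assms(2) lam_scale_ge_1[of r] by (simp add: summable_geometric)
  show "norm (eqn_term r u k) \<le> (u * lam_scale r)^(k+1)" for k
    using eqn_term_le_geometric[OF assms(1,2)] eqn_term_nonneg[of r u k] assms by simp
qed

lemma isCont_eqn_sum:
  assumes "0 < r" "0 \<le> u" "u < 1 / lam_scale r"
  shows "isCont (\<lambda>v. suminf (eqn_term r v)) u"
proof -
  define c where "c k = (if k \<in> support then r^(Lcount a 0 k) else 0)" for k
  have eqn_term_eq: "eqn_term r v = (\<lambda>k. v * (c k * v^k))" for v
    by (simp add: fun_eq_iff eqn_term_def c_def)
  define w where "w = (u + 1 / lam_scale r) / 2"
  have w: "0 < w" "u < w" "w < 1 / lam_scale r" using assms lam_scale_ge_1[of r] by (auto simp: w_def)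
  have summable_w: "summable (\<lambda>k. c k * w^k)"
    using summable_divide[OF summable_eqn_term[OF assms(1) _ w(3)], of w] w(1)
    by (simp add: eqn_term_eq)
  then have summable_c: "summable (\<lambda>k. c k * v^k)" if "\<bar>v\<bar> < w" for v
    using powser_inside[OF summable_w, of v] that w(1) by simp
  have "isCont (\<lambda>v. \<Sum>k. c k * v^k) u"
    using isCont_powser[OF summable_w] w assms(2) by simp
  then have cont: "isCont (\<lambda>v. v * (\<Sum>k. c k * v^k)) u"
    by (intro isCont_mult continuous_ident)
  have "eventually (\<lambda>v. v \<in> {-w<..<w}) (nhds u)"
    using w assms(2) by (intro eventually_nhds_in_open) auto
  then have eq: "eventually (\<lambda>v. suminf (eqn_term r v) = v * (\<Sum>k. c k * v^k)) (nhds u)"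
  proof eventually_elim
    case (elim v)
    then have "\<bar>v\<bar> < w" by auto
    then show ?case unfolding eqn_term_eq by (rule suminf_mult[OF summable_c])
  qed
  show ?thesis using isCont_cong[OF eq] cont by simp
qed

lemma lam_scale_1: "lam_scale 1 = 1"
  by (simp add: lam_scale_def)

lemma a_mult_Tmap: "y \<notin> Ia a \<Longrightarrow> a * Tmap a y = y + (if y < 1 then 1 else -1)"
  using a_pos by (cases "y < 1") (simp_all add: Tmap_left Tmap_right)

lemma support_partial_sum:
  "admissible 0 n \<Longrightarrow>
     (\<Sum>k<n. eqn_term 1 a k) = a / (2 * (1 - a)) * (1 - a^n) + a^(n+1) * orbit 0 n / 2"
proof (induction n)
  case (Suc n)
  have adm: "admissible 0 n" and avoid: "orbit 0 n \<notin> Ia a"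
    using Suc.prems by (simp_all add: admissible_def)
  have "enat n \<le> kappa a 0"
    using adm le_kappa_iff_admissible[of 0 n] by simp
  then have "eqn_term 1 a n = (if orbit 0 n < 1 then a^(n+1) else 0)"
    by (simp add: eqn_term_def support_def delta_def)
  moreover have "a^(Suc n + 1) * orbit 0 (Suc n) = a^(n+1) * (orbit 0 n + (if orbit 0 n < 1 then 1 else -1))"
    using a_mult_Tmap[OF avoid] by (simp add: mult_ac)
  moreover have "a / (2 * (1 - a)) * (1 - a^Suc n) = a / (2 * (1 - a)) * (1 - a^n) + a^(n+1) / 2"
    using a_lt_1 by (simp add: field_simps)
  ultimately show ?case
    using Suc.IH[OF adm] by (cases "orbit 0 n < 1") (simp_all add: field_simps)
qed simp

lemma summable_support_series: "summable (eqn_term 1 a)"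
  using a_pos a_lt_1 by (intro summable_eqn_term) (simp_all add: lam_scale_1)

lemma support_series_le_if_kappa_infinite:
  assumes "kappa a 0 = \<infinity>"
  shows "suminf (eqn_term 1 a) \<le> a / (2 * (1 - a))"
proof (rule suminf_le_const[OF summable_support_series])
  fix n
  have adm: "admissible 0 n" using assms le_kappa_iff_admissible[of 0 n] by simp
  have "orbit 0 n \<le> right_end"
    using orbit_le_right_end[OF adm] a_lt_1 by (simp add: right_end_def)
  then have "a^(n+1) * orbit 0 n / 2 \<le> a^(n+1) * right_end / 2"
    using a_pos by (intro divide_right_mono mult_left_mono) auto
  also have "\<dots> = a / (2 * (1 - a)) * a^n"
    using a_lt_1 by (simp add: right_end_def field_simps)
  finally have "a^(n+1) * orbit 0 n / 2 \<le> a / (2 * (1 - a)) * a^n" .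
  then have "(\<Sum>k<n. eqn_term 1 a k) \<le> a / (2 * (1 - a)) * (1 - a^n) + a / (2 * (1 - a)) * a^n"
    using support_partial_sum[OF adm] by simp
  then show "(\<Sum>k<n. eqn_term 1 a k) \<le> a / (2 * (1 - a))"
    by (simp add: right_diff_distrib)
qed

lemma support_series_lt_1_if_kappa_finite:
  assumes "kappa a 0 = enat K"
  shows "suminf (eqn_term 1 a) < 1"
proof -
  have hit: "orbit 0 K \<in> Ia a" using assms by (rule kappa_enat_hit)
  have adm: "admissible 0 K" using assms le_kappa_iff_admissible[of 0 K] by simp
  have "eqn_term 1 a sums (\<Sum>k<Suc K. eqn_term 1 a k)"
    using assms by (intro sums_finite) (auto simp: eqn_term_def support_def)
  then have "suminf (eqn_term 1 a) = (\<Sum>k<K. eqn_term 1 a k) + a^(K+1)"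
    using assms hit by (simp add: sums_iff eqn_term_def support_def delta_def Ia_iff)
  also have "\<dots> < a / (2 * (1 - a)) * (1 - a^K) + 3/2 * a^(K+1)"
    using support_partial_sum[OF adm] hit a_pos by (simp add: Ia_iff)
  also have "\<dots> \<le> (1 - a^K) + a^K"
  proof (rule add_mono)
    show "a / (2 * (1 - a)) * (1 - a^K) \<le> 1 - a^K"
      using a_le a_pos a_lt_1 by (intro mult_left_le_one_le) (auto simp: power_le_one field_simps)
    show "3/2 * a^(K+1) \<le> a^K" using a_le a_pos by simp
  qed
  finally show ?thesis by simp
qed

lemma support_series_le_1:
  shows "suminf (eqn_term 1 a) \<le> 1" and "a < 2/3 \<Longrightarrow> suminf (eqn_term 1 a) < 1"
proof -
  have "suminf (eqn_term 1 a) < 1 \<or> suminf (eqn_term 1 a) \<le> a / (2 * (1 - a))"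
    using support_series_le_if_kappa_infinite support_series_lt_1_if_kappa_finite
    by (cases "kappa a 0") auto
  moreover have "a / (2 * (1 - a)) \<le> 1" and "a < 2/3 \<Longrightarrow> a / (2 * (1 - a)) < 1"
    using a_le a_lt_1 by (simp_all add: field_simps)
  ultimately show "suminf (eqn_term 1 a) \<le> 1" and "a < 2/3 \<Longrightarrow> suminf (eqn_term 1 a) < 1"
    by linarith+
qed

context
  fixes r :: real
  assumes r_pos: "0 < r"
begin

lemma eqn_term_at_lower_le: "eqn_term r (a / lam_scale r) k \<le> eqn_term 1 a k"
proof -
  have "eqn_term r (a / lam_scale r) k \<le> (a / lam_scale r * lam_scale r)^(k+1)"
    using r_pos a_pos lam_scale_ge_1[of r] by (intro eqn_term_le_geometric) auto
  then show ?thesis using lam_scale_ge_1[of r] by (simp add: eqn_term_def split: if_splits)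
qed

lemma eqn_term_at_lower_less:
  assumes "r \<noteq> 1"
  shows "\<exists>i. eqn_term r (a / lam_scale r) i < eqn_term 1 a i"
proof (cases "1 < r")
  case True
  then have "1 < lam_scale r" using rate_pos by (simp add: lam_scale_def)
  then have "a / lam_scale r < a" using a_pos by (simp add: divide_less_eq)
  then have "eqn_term r (a / lam_scale r) 0 < eqn_term 1 a 0" by (simp add: eqn_term_0)
  then show ?thesis ..
next
  case False
  with assms r_pos have "r < 1" "lam_scale r = 1"
    using rate_pos by (auto simp: lam_scale_def powr_le1)
  obtain k where k: "k \<in> support" "0 < k" using support_has_pos by blast
  have "r^(Lcount a 0 k) < 1"
    using \<open>r < 1\<close> r_pos Lcount_zero_pos[OF k(2)] by (simp add: power_less_one_iff)
  then have "eqn_term r a k < eqn_term 1 a k" using k a_pos by (simp add: eqn_term_def)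
  then show ?thesis using \<open>lam_scale r = 1\<close> by auto
qed

lemma summable_at_lower: "summable (eqn_term r (a / lam_scale r))"
  using r_pos a_pos a_lt_1 lam_scale_ge_1[of r]
  by (intro summable_eqn_term) (auto simp: divide_strict_right_mono)

lemma eqn_sum_at_lower:
  shows "suminf (eqn_term r (a / lam_scale r)) \<le> 1"
    and "a < 2/3 \<or> r \<noteq> 1 \<Longrightarrow> suminf (eqn_term r (a / lam_scale r)) < 1"
proof -
  note summable = summable_at_lower
  have le: "suminf (eqn_term r (a / lam_scale r)) \<le> suminf (eqn_term 1 a)"
    using summable summable_support_series eqn_term_at_lower_le by (intro suminf_le) auto
  then show "suminf (eqn_term r (a / lam_scale r)) \<le> 1" using support_series_le_1(1) by simp
  assume "a < 2/3 \<or> r \<noteq> 1"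
  then show "suminf (eqn_term r (a / lam_scale r)) < 1"
  proof
    assume "a < 2/3"
    then show ?thesis using le support_series_le_1(2) by simp
  next
    assume "r \<noteq> 1"
    then obtain i where "eqn_term r (a / lam_scale r) i < eqn_term 1 a i"
      using eqn_term_at_lower_less by blast
    then have "suminf (eqn_term r (a / lam_scale r)) < suminf (eqn_term 1 a)"
      using summable summable_support_series eqn_term_at_lower_le by (intro suminf_less_suminf) auto
    then show ?thesis using support_series_le_1(1) by simp
  qed
qed

lemma eqn_partial_sum_at_upper:
  "\<exists>F. finite F \<and> F \<subseteq> support \<and> 1 < (\<Sum>k\<in>F. eqn_term r (1 / lam_scale r) k)"
proof (cases "r \<le> 1")
  case True
  then have "lam_scale r = 1"
    using r_pos rate_pos by (simp add: lam_scale_def powr_le1)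
  obtain k where k: "k \<in> support" "0 < k" using support_has_pos by blast
  have "(\<Sum>i\<in>{0, k}. eqn_term r (1 / lam_scale r) i) = 1 + r^(Lcount a 0 k)"
    using k \<open>lam_scale r = 1\<close> zero_in_support by (simp add: eqn_term_def)
  moreover have "0 < r^(Lcount a 0 k)" using r_pos by simp
  moreover have "{0, k} \<subseteq> support" using k zero_in_support by simp
  ultimately show ?thesis by (intro exI[of _ "{0, k}"]) auto
next
  case False
  then have "lam_scale r = r powr rate"
    using rate_pos by (simp add: lam_scale_def ge_one_powr_ge_zero)
  have term_eq: "eqn_term r (1 / lam_scale r) k = r powr (- slack k)" if "k \<in> support" for k
  proof -
    have "r powr (- slack k) = r powr real (Lcount a 0 k) / r powr (real (k+1) * rate)"
      by (simp add: slack_def powr_diff algebra_simps)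
    also have "r powr (real (k+1) * rate) = lam_scale r^(k+1)"
      using r_pos \<open>lam_scale r = r powr rate\<close> by (simp only: powr_power)
    also have "r powr real (Lcount a 0 k) = r^(Lcount a 0 k)"
      using r_pos by (rule powr_realpow)
    finally show ?thesis using that by (simp add: eqn_term_def power_one_over)
  qed
  obtain F where F: "finite F" "F \<subseteq> support" "1 < (\<Sum>k\<in>F. r powr (- slack k))"
    using slack_powr_sum_gt_one[of r] False by auto
  moreover have "(\<Sum>k\<in>F. r powr (- slack k)) = (\<Sum>k\<in>F. eqn_term r (1 / lam_scale r) k)"
    using F(2) term_eq by (intro sum.cong) auto
  ultimately show ?thesis by auto
qed

lemma eqn_sum_strict_mono:
  assumes "0 \<le> u" "u < v" "summable (eqn_term r v)"
  shows "summable (eqn_term r u)" "suminf (eqn_term r u) < suminf (eqn_term r v)"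
proof -
  show summable: "summable (eqn_term r u)"
    using assms r_pos eqn_term_nonneg eqn_term_mono
    by (intro summable_comparison_test'[OF assms(3)]) auto
  show "suminf (eqn_term r u) < suminf (eqn_term r v)"
    using summable assms r_pos eqn_term_mono by (intro suminf_less_suminf[of _ _ 0]) (auto simp: eqn_term_0)
qed

lemma eqn_sum_gt_1_beyond_upper:
  assumes "1 / lam_scale r \<le> u" "summable (eqn_term r u)"
  shows "1 < suminf (eqn_term r u)"
proof -
  have "0 < 1 / lam_scale r" using lam_scale_ge_1[of r] by simp
  with assms(1) have "0 \<le> u" by linarith
  obtain F where F: "finite F" "F \<subseteq> support" "1 < (\<Sum>k\<in>F. eqn_term r (1 / lam_scale r) k)"
    using eqn_partial_sum_at_upper by blast
  note F(3)
  also have "\<dots> \<le> (\<Sum>k\<in>F. eqn_term r u k)"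
    using assms(1) r_pos lam_scale_ge_1[of r] by (intro sum_mono eqn_term_mono) auto
  also have "\<dots> \<le> suminf (eqn_term r u)"
    using assms(2) \<open>0 \<le> u\<close> r_pos F(1) by (intro sum_le_suminf eqn_term_nonneg) auto
  finally show ?thesis .
qed

lemma eqn_sum_gt_1_below_upper:
  "\<exists>v. a / lam_scale r \<le> v \<and> v < 1 / lam_scale r \<and> 1 < suminf (eqn_term r v)"
proof -
  obtain F where F: "finite F" "F \<subseteq> support" "1 < (\<Sum>k\<in>F. eqn_term r (1 / lam_scale r) k)"
    using eqn_partial_sum_at_upper by blast
  have "isCont (\<lambda>v. eqn_term r v k) x" for k x
    by (cases "k \<in> support") (simp_all add: eqn_term_def)
  then have "isCont (\<lambda>v. \<Sum>k\<in>F. eqn_term r v k) (1 / lam_scale r)"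
    by simp
  then have "((\<lambda>v. \<Sum>k\<in>F. eqn_term r v k) \<longlongrightarrow> (\<Sum>k\<in>F. eqn_term r (1 / lam_scale r) k))
      (at_left (1 / lam_scale r))"
    unfolding isCont_def filterlim_at_split by blast
  then have "eventually (\<lambda>v. 1 < (\<Sum>k\<in>F. eqn_term r v k)) (at_left (1 / lam_scale r))"
    using F(3) by (rule order_tendstoD(1))
  moreover have "a / lam_scale r < 1 / lam_scale r"
    using a_lt_1 lam_scale_ge_1[of r] by (simp add: divide_strict_right_mono)
  then have "eventually (\<lambda>v. v \<in> {a / lam_scale r <..< 1 / lam_scale r}) (at_left (1 / lam_scale r))"
    by (rule eventually_at_left_real)
  ultimately have "eventually (\<lambda>v. 1 < (\<Sum>k\<in>F. eqn_term r v k) \<and> v \<in> {a / lam_scale r <..< 1 / lam_scale r})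
      (at_left (1 / lam_scale r))"
    by (rule eventually_conj)
  then obtain v where v: "a / lam_scale r < v" "v < 1 / lam_scale r" "1 < (\<Sum>k\<in>F. eqn_term r v k)"
    using eventually_happens'[OF trivial_limit_at_left_real] by auto
  have "0 \<le> v" using v(1) lower_end_pos[of r] by linarith
  then have "(\<Sum>k\<in>F. eqn_term r v k) \<le> suminf (eqn_term r v)"
    using F(1) v(2) r_pos by (intro sum_le_suminf summable_eqn_term eqn_term_nonneg) auto
  then show ?thesis using v by (intro exI[of _ v]) auto
qed

lemma eqn_root_exists: "\<exists>u. a / lam_scale r \<le> u \<and> u < 1 / lam_scale r \<and> eqn_term r u sums 1"
proof -
  obtain v where v: "a / lam_scale r \<le> v" "v < 1 / lam_scale r" "1 < suminf (eqn_term r v)"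
    using eqn_sum_gt_1_below_upper by blast
  have lower_pos: "0 \<le> a / lam_scale r" using lower_end_pos[of r] by simp
  have "continuous_on {a / lam_scale r..v} (\<lambda>u. suminf (eqn_term r u))"
    using v(2) lower_pos r_pos by (intro continuous_at_imp_continuous_on ballI isCont_eqn_sum) auto
  then obtain u where u: "a / lam_scale r \<le> u" "u \<le> v" "suminf (eqn_term r u) = 1"
    using IVT'[OF eqn_sum_at_lower(1) less_imp_le[OF v(3)] v(1)] by blast
  have "summable (eqn_term r u)"
    using u v(2) lower_pos r_pos by (intro summable_eqn_term) auto
  then show ?thesis using u v(2) by (intro exI[of _ u]) (simp add: sums_iff)
qed

lemma eqn_root_unique:
  assumes "0 < u" "0 < v" "eqn_term r u sums 1" "eqn_term r v sums 1"
  shows "u = v"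
proof (rule ccontr)
  assume "u \<noteq> v"
  then consider "u < v" | "v < u" by linarith
  then show False
  proof cases
    case 1
    then show False using eqn_sum_strict_mono(2)[of u v] assms by (simp add: sums_iff)
  next
    case 2
    then show False using eqn_sum_strict_mono(2)[of v u] assms by (simp add: sums_iff)
  qed
qed

lemma eqn_root_bounds:
  assumes "0 < u" "eqn_term r u sums 1"
  shows "a / lam_scale r \<le> u" "u < 1 / lam_scale r" "a < 2/3 \<or> r \<noteq> 1 \<Longrightarrow> a / lam_scale r < u"
proof -
  have summable: "summable (eqn_term r u)" and sum: "suminf (eqn_term r u) = 1"
    using assms(2) by (simp_all add: sums_iff)
  show "u < 1 / lam_scale r"
    using eqn_sum_gt_1_beyond_upper[OF _ summable] sum by force
  show lower: "a / lam_scale r \<le> u"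
  proof (rule ccontr)
    assume "\<not> a / lam_scale r \<le> u"
    then have "suminf (eqn_term r u) < suminf (eqn_term r (a / lam_scale r))"
      using eqn_sum_strict_mono(2)[OF less_imp_le[OF assms(1)] _ summable_at_lower] by simp
    then show False using eqn_sum_at_lower(1) sum by simp
  qed
  show "a / lam_scale r < u" if "a < 2/3 \<or> r \<noteq> 1"
  proof -
    have "a / lam_scale r \<noteq> u" using eqn_sum_at_lower(2)[OF that] sum by auto
    then show ?thesis using lower by simp
  qed
qed

end

lemma lam_eqn_unique_solution:
  assumes "0 < p" "p < 1"
  shows "\<exists>!lam. 0 < lam \<and> lam_eqn a p lam"
proof -
  let ?r = "(1 - p) / p"
  have r: "0 < ?r" using assms by simp
  obtain u where u: "a / lam_scale ?r \<le> u" "eqn_term ?r u sums 1"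
    using eqn_root_exists[OF r] by blast
  have "0 < u" using u(1) lower_end_pos[of ?r] by linarith
  show ?thesis
  proof (rule ex1I[of _ "p / u"])
    show "0 < p / u \<and> lam_eqn a p (p / u)"
      using u(2) \<open>0 < u\<close> assms by (simp add: lam_eqn_iff_sums)
    fix lam assume lam: "0 < lam \<and> lam_eqn a p lam"
    then have "p / lam = u"
      using eqn_root_unique[OF r _ \<open>0 < u\<close> _ u(2)] assms by (simp add: lam_eqn_iff_sums)
    then show "lam = p / u" using lam assms by (auto simp: field_simps)
  qed
qed

lemma lam_eqn_solution_bounds:
  assumes "0 < p" "p < 1" "0 < lam" "lam_eqn a p lam"
  shows "lam \<le> p / a * lam_scale ((1 - p) / p)" "p * lam_scale ((1 - p) / p) < lam"
    and "\<not> (a = 2/3 \<and> p = 1/2) \<Longrightarrow> lam < p / a * lam_scale ((1 - p) / p)"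
proof -
  let ?r = "(1 - p) / p" and ?M = "lam_scale ((1 - p) / p)"
  have r: "0 < ?r" and u: "0 < p / lam" "eqn_term ?r (p / lam) sums 1"
    using assms by (simp_all add: lam_eqn_iff_sums)
  have M: "0 < ?M" using lam_scale_ge_1[of ?r] by simp
  show "lam \<le> p / a * ?M"
    using eqn_root_bounds(1)[OF r u] M assms a_pos by (simp add: field_simps)
  show "p * ?M < lam"
    using eqn_root_bounds(2)[OF r u] M assms by (simp add: field_simps)
  assume "\<not> (a = 2/3 \<and> p = 1/2)"
  then have "a < 2/3 \<or> ?r \<noteq> 1" using a_le assms(1) by (auto simp: field_simps)
  then show "lam < p / a * ?M"
    using eqn_root_bounds(3)[OF r u] M assms a_pos by (simp add: field_simps)
qed

end

theorem proposition3p1: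
  fixes a :: real
  assumes "1/2 < a" and "a \<le> 2/3"
  shows "(\<forall>p. 0 < p \<and> p < 1 \<longrightarrow> (\<exists>!lam. 0 < lam \<and> lam_eqn a p lam)) \<and>
         (\<exists>C::real. C > 0 \<and>
            (\<forall>p lam. 0 < p \<and> p < 1 \<and> 0 < lam \<and> lam_eqn a p lam \<longrightarrow>
               p / a * max 1 (((1 - p) / p) powr C) \<ge> lam \<and>
               lam > p * max 1 (((1 - p) / p) powr C) \<and>
               (\<not> (a = 2/3 \<and> p = 1/2) \<longrightarrow> p / a * max 1 (((1 - p) / p) powr C) > lam)) \<and>
            (\<forall>x k n. 0 \<le> x \<and> x \<le> 1 / (1 - a) \<and> k \<le> n \<and> enat n \<le> kappa a x \<longrightarrow>
               real (Lcount a x n) - real (Lcount a x k) \<le> C * (real n - real k + 1) + 1))"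
proof -
  interpret hole_map a using assms by unfold_locales
  show ?thesis
  proof (intro conjI allI impI exI[of _ rate])
    show "0 < rate" by (rule rate_pos)
  next
    fix p :: real assume "0 < p \<and> p < 1"
    then show "\<exists>!lam. 0 < lam \<and> lam_eqn a p lam" using lam_eqn_unique_solution by blast
  next
    fix p lam :: real assume "0 < p \<and> p < 1 \<and> 0 < lam \<and> lam_eqn a p lam"
    then show "lam \<le> p / a * max 1 (((1 - p) / p) powr rate)"
      and "p * max 1 (((1 - p) / p) powr rate) < lam"
      and "\<not> (a = 2/3 \<and> p = 1/2) \<Longrightarrow> lam < p / a * max 1 (((1 - p) / p) powr rate)"
      using lam_eqn_solution_bounds unfolding lam_scale_def by blast+
  next
    fix x :: real and k n :: nat
    assume "0 \<le> x \<and> x \<le> 1 / (1 - a) \<and> k \<le> n \<and> enat n \<le> kappa a x"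
    then show "real (Lcount a x n) - real (Lcount a x k) \<le> rate * (real n - real k + 1) + 1"
      using Lcount_window_le le_kappa_iff_admissible by blast
  qed
qed

end
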